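(* Let $d \geq 4$ be an integer and for a positive integer $m$ let $\omega_m := e^{2\pi i/m}$. Define vectors in $\mathbb{C}^d$ by $$v_1 := \Big(\tfrac{1}{\sqrt 2}, \tfrac{1}{\sqrt{2d-2}}, \ldots, \tfrac{1}{\sqrt{2d-2}}\Big)^T,\qquad v_2 := \Big(\tfrac{1}{\sqrt 2}, \tfrac{-1}{\sqrt{2d-2}}, \ldots, \tfrac{-1}{\sqrt{2d-2}}\Big)^T,$$ and, for $j = 1, \ldots, d-2$, $$v_{j+2} := \tfrac{1}{\sqrt{d-1}}\big(0, \omega_{d-1}^{0}, \omega_{d-1}^{j}, \omega_{d-1}^{2j}, \ldots, \omega_{d-1}^{(d-2)j}\big)^T.$$ Set $\lambda_1 := 1$, $\lambda_2 := -1$, $\lambda_{j+2} := \omega_{d-2}^j$ for $j = 1,\ldots,d-2$, and $U := \sum_{j=1}^d \lambda_j v_j v_j^*$. Then $U$ is a unitary $d\times d$ matrix, every diagonal entry of $U$ equals $0$, and every off-diagonal entry of $U$ is nonzero. *)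

theory Defs
  imports "HOL-Analysis.Analysis" "Jordan_Normal_Form.Matrix"
begin

definition omega :: "nat \<Rightarrow> complex" where
  "omega m = exp (2 * pi * \<i> / of_nat m)"

definition cadj :: "complex mat \<Rightarrow> complex mat" where
  "cadj A = mat (dim_col A) (dim_row A) (\<lambda>(i,j). cnj (A $$ (j,i)))"

definition unitary_mat :: "nat \<Rightarrow> complex mat \<Rightarrow> bool" where
  "unitary_mat d U \<longleftrightarrow> U \<in> carrier_mat d d \<and> U * cadj U = 1\<^sub>m d \<and> cadj U * U = 1\<^sub>m d"

(* Vectors v_1,...,v_d of the paper, indexed 1..d; coordinates are 0-based (k = 0..d-1),
   so coordinate k corresponds to the paper's (k+1)-th entry. *)
definition vv :: "nat \<Rightarrow> nat \<Rightarrow> complex vec" where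
  "vv d j = vec d (\<lambda>k.
     if j = 1 then (if k = 0 then 1 / sqrt 2 else 1 / sqrt (2 * real d - 2))
     else if j = 2 then (if k = 0 then 1 / sqrt 2 else - 1 / sqrt (2 * real d - 2))
     else (if k = 0 then 0
           else omega (d - 1) ^ ((k - 1) * (j - 2)) / complex_of_real (sqrt (real d - 1))))"

definition lam :: "nat \<Rightarrow> nat \<Rightarrow> complex" where
  "lam d j = (if j = 1 then 1 else if j = 2 then -1 else omega (d - 2) ^ (j - 2))"

definition UU :: "nat \<Rightarrow> complex mat" where
  "UU d = mat d d (\<lambda>(a,b). \<Sum>j=1..d. lam d j * (vv d j $ a) * cnj (vv d j $ b))"

end

theory Submission
  imports Defs "Jordan_Normal_Form.Determinant"
begin

(*
  The vectors v_1, ..., v_d form an orthonormal basis of C^d: on the last d - 1 coordinates,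
  v_3, ..., v_d are the normalised non-trivial characters of the (d-1)-th roots of unity, and
  v_1, v_2 combine e_1 with the normalised constant vector. Hence U, whose eigenvalues have
  modulus 1, is unitary. Its entries are explicit: U_11 = (lambda_1 + lambda_2)/2 = 0,
  U_1k = U_k1 = (lambda_1 - lambda_2)/(2 sqrt(d-1)) = 1/sqrt(d-1), and for k, m >= 2
  U_km = (1/(d-1)) sum_{p=1}^{d-2} (omega_(d-2) zeta)^p  with  zeta = omega_(d-1)^(k-m).
  This geometric sum vanishes iff omega_(d-2) zeta <> 1 and (omega_(d-2) zeta)^(d-2) = 1;
  since zeta^(d-1) = 1, the latter means zeta^(d-2) = 1, i.e. zeta = 1, i.e. k = m.
*)

(* Otherwise "$" also denotes vec_nth of HOL-Analysis and every vector index is ambiguous. *)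
unbundle no vec_syntax

lemma omega_power: "omega n ^ k = exp (2 * pi * \<i> * of_nat k / of_nat n)"
  unfolding omega_def by (metis exp_of_nat_mult mult.commute times_divide_eq_right mult.assoc)

lemma omega_power_eq_1_iff:
  assumes "n > 0"
  shows "omega n ^ k = 1 \<longleftrightarrow> n dvd k"
proof -
  have "omega n ^ k = 1 \<longleftrightarrow> (\<exists>m::int. 2 * pi * real k / real n = of_int (2 * m) * pi)"
    unfolding omega_power exp_eq_1 by (simp add: Im_divide_of_nat)
  also have "\<dots> \<longleftrightarrow> (\<exists>m::int. real k = of_int m * real n)"
    using assms by (auto simp: field_simps)
  also have "\<dots> \<longleftrightarrow> int n dvd int k"
    unfolding dvd_def by (metis mult.commute of_int_eq_iff of_int_mult of_int_of_nat_eq)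
  finally show ?thesis by simp
qed

lemma omega_nonzero: "omega n \<noteq> 0"
  by (simp add: omega_def)

lemma cnj_omega_power_mult: "cnj (omega n ^ k) * omega n ^ k = 1"
proof -
  have "norm (omega n) = 1"
    by (simp add: omega_def norm_exp_eq_Re)
  then show ?thesis
    by (metis complex_cnj_power complex_norm_square mult.commute norm_power of_real_1 power_one)
qed

lemma omega_power_inj:
  assumes "p < n" "q < n" "omega n ^ p = omega n ^ q"
  shows "p = q"
proof -
  have "p = q" if "p \<le> q" "q < n" "omega n ^ p = omega n ^ q" for p q
  proof -
    have "omega n ^ (q - p) = 1"
      using that omega_nonzero by (simp add: power_diff)
    then have "n dvd q - p"
      using that omega_power_eq_1_iff by simp
    then show ?thesis
      using that by (auto dest!: dvd_imp_le)
  qed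
  then show ?thesis
    using assms by (metis linorder_le_cases)
qed

lemma omega_ratio_power_n:
  assumes "n > 0"
  shows "(cnj (omega n ^ p) * omega n ^ q) ^ n = 1"
proof -
  have "(cnj (omega n ^ p) * omega n ^ q) ^ n = cnj ((omega n ^ n) ^ p) * (omega n ^ n) ^ q"
    by (simp add: power_mult_distrib mult.commute flip: power_mult)
  also have "\<dots> = 1"
    using assms omega_power_eq_1_iff[of n n] by simp
  finally show ?thesis .
qed

lemma omega_ratio_eq_1_iff:
  assumes "p < n" "q < n"
  shows "cnj (omega n ^ p) * omega n ^ q = 1 \<longleftrightarrow> p = q"
proof
  assume "cnj (omega n ^ p) * omega n ^ q = 1"
  then have "omega n ^ q = omega n ^ p"
    by (metis cnj_omega_power_mult mult.commute mult.left_neutral mult.assoc)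
  then show "p = q"
    using omega_power_inj assms by metis
qed (use cnj_omega_power_mult in metis)

lemma sum_omega_ratio_powers:
  assumes "p < n" "q < n"
  shows "(\<Sum>k<n. (cnj (omega n ^ p) * omega n ^ q) ^ k) = (if p = q then of_nat n else 0)"
  using assms omega_ratio_eq_1_iff[OF assms] omega_ratio_power_n[of n p q]
  by (auto simp: cnj_omega_power_mult sum_gp_strict)

lemma sum_powers_from_1_eq_0_iff:
  fixes z :: "'a :: field_char_0"
  assumes "z \<noteq> 0" "N > 0"
  shows "(\<Sum>p=1..N. z ^ p) = 0 \<longleftrightarrow> z \<noteq> 1 \<and> z ^ N = 1"
proof (cases "z = 1")
  case False
  have "(1 - z) * (\<Sum>p=1..N. z ^ p) = z * (1 - z ^ N)"
    using sum_gp_multiplied[of 1 N z] assms by (simp add: algebra_simps)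
  then show ?thesis
    using False assms by (metis (no_types, lifting) eq_iff_diff_eq_0 mult_eq_0_iff right_minus_eq)
qed (use assms in simp)

lemma sum_split_first_two:
  fixes d :: nat
  assumes "2 \<le> d"
  shows "(\<Sum>j=1..d. g j) = g 1 + g 2 + (\<Sum>p=1..d-2. g (p + 2))"
proof -
  have "(\<Sum>j=1..d. g j) = g 1 + g 2 + (\<Sum>j=3..d. g j)"
    using assms by (simp add: sum.atLeast_Suc_atMost numeral_eq_Suc add.assoc)
  also have "(\<Sum>j=3..d. g j) = (\<Sum>j=1+2..(d-2)+2. g j)"
    using assms by (intro sum.cong) auto
  finally show ?thesis
    by (simp only: sum.shift_bounds_cl_nat_ivl)
qed

lemma sum_outer_products_mult:
  fixes v :: "'j \<Rightarrow> 'c \<Rightarrow> complex"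
  assumes "finite J" "finite C"
    and orthonormal: "\<And>j l. j \<in> J \<Longrightarrow> l \<in> J \<Longrightarrow>
      (\<Sum>c\<in>C. cnj (v j c) * v l c) = (if j = l then 1 else 0)"
  shows "(\<Sum>c\<in>C. (\<Sum>j\<in>J. \<mu> j * v j a * cnj (v j c)) * cnj (\<Sum>l\<in>J. \<nu> l * v l b * cnj (v l c)))
    = (\<Sum>j\<in>J. \<mu> j * cnj (\<nu> j) * v j a * cnj (v j b))"
proof -
  have "(\<Sum>c\<in>C. (\<Sum>j\<in>J. \<mu> j * v j a * cnj (v j c)) * cnj (\<Sum>l\<in>J. \<nu> l * v l b * cnj (v l c)))
      = (\<Sum>c\<in>C. \<Sum>l\<in>J. \<Sum>j\<in>J. \<mu> j * cnj (\<nu> l) * v j a * cnj (v l b) * (cnj (v j c) * v l c))"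
    by (simp add: sum_distrib_left sum_distrib_right mult_ac)
  also have "\<dots> = (\<Sum>l\<in>J. \<Sum>j\<in>J. \<mu> j * cnj (\<nu> l) * v j a * cnj (v l b) * (\<Sum>c\<in>C. cnj (v j c) * v l c))"
    by (simp add: sum_distrib_left sum.swap[of _ C])
  also have "\<dots> = (\<Sum>l\<in>J. \<Sum>j\<in>J. \<mu> j * cnj (\<nu> l) * v j a * cnj (v l b) * (if j = l then 1 else 0))"
    by (intro sum.cong refl) (simp add: orthonormal)
  also have "\<dots> = (\<Sum>j\<in>J. \<mu> j * cnj (\<nu> j) * v j a * cnj (v j b))"
    using assms by (simp add: if_distrib sum.delta cong: if_cong)
  finally show ?thesis .
qed

lemma unitary_matI:
  assumes "U \<in> carrier_mat d d" "U * cadj U = 1\<^sub>m d"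
  shows "unitary_mat d U"
proof -
  have "cadj U \<in> carrier_mat d d"
    using assms(1) by (simp add: cadj_def)
  then show ?thesis
    using assms mat_mult_left_right_inverse unfolding unitary_mat_def by blast
qed

definition vv_coord0 :: "nat \<Rightarrow> complex" where
  "vv_coord0 j = (if j = 1 \<or> j = 2 then 1 / sqrt 2 else 0)"

definition vv_amplitude :: "nat \<Rightarrow> nat \<Rightarrow> complex" where
  "vv_amplitude n j =
    (if j = 1 then 1 / sqrt (2 * real n) else if j = 2 then - 1 / sqrt (2 * real n) else 1 / sqrt n)"

(* For j >= 3 the frequency j - 2 below is the paper's j; for j = 1, 2 the truncated
   difference j - 2 is 0, so the same formula also covers v_1 and v_2. *)
lemma vv_coord_0: "vv (Suc n) j $ 0 = vv_coord0 j"
  by (simp add: vv_def vv_coord0_def)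

lemma vv_coord_Suc:
  assumes "k < n"
  shows "vv (Suc n) j $ Suc k = vv_amplitude n j * (omega n ^ (j - 2)) ^ k"
  using assms by (simp add: vv_def vv_amplitude_def mult.commute[of k] power_mult)

lemma vv_inner_product:
  assumes "j - 2 < n" "l - 2 < n"
  shows "(\<Sum>c<Suc n. cnj (vv (Suc n) j $ c) * vv (Suc n) l $ c)
    = cnj (vv_coord0 j) * vv_coord0 l
      + cnj (vv_amplitude n j) * vv_amplitude n l * (if j - 2 = l - 2 then of_nat n else 0)"
proof -
  let ?w = "cnj (omega n ^ (j - 2)) * omega n ^ (l - 2)"
  have "(\<Sum>k<n. cnj (vv (Suc n) j $ Suc k) * vv (Suc n) l $ Suc k)
      = cnj (vv_amplitude n j) * vv_amplitude n l * (\<Sum>k<n. ?w ^ k)"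
    by (simp add: vv_coord_Suc sum_distrib_left power_mult_distrib mult_ac)
  then show ?thesis
    unfolding sum.lessThan_Suc_shift using sum_omega_ratio_powers[OF assms] by (simp add: vv_coord_0)
qed

lemma vv_orthonormal:
  assumes "2 \<le> n" "j \<in> {1..Suc n}" "l \<in> {1..Suc n}"
  shows "(\<Sum>c<Suc n. cnj (vv (Suc n) j $ c) * vv (Suc n) l $ c) = (if j = l then 1 else 0)"
proof -
  have "complex_of_real (sqrt 2) ^ 2 = 2" "complex_of_real (sqrt (2 * real n)) ^ 2 = 2 * n"
    "complex_of_real (sqrt n) ^ 2 = n"
    by (simp_all flip: of_real_power)
  moreover have "(of_nat n :: complex) \<noteq> 0"
    using assms by simp
  ultimately show ?thesis
    using assms by (subst vv_inner_product)
      (auto simp: vv_coord0_def vv_amplitude_def field_simps power2_eq_square)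
qed

definition vv_mat :: "nat \<Rightarrow> complex mat" where
  "vv_mat d = mat d d (\<lambda>(c, j). vv d (Suc j) $ c)"

lemma cadj_vv_mat_mult:
  assumes "2 \<le> n"
  shows "cadj (vv_mat (Suc n)) * vv_mat (Suc n) = 1\<^sub>m (Suc n)"
proof (rule eq_matI)
  fix j l
  assume "j < dim_row (1\<^sub>m (Suc n))" "l < dim_col (1\<^sub>m (Suc n))"
  then have "(cadj (vv_mat (Suc n)) * vv_mat (Suc n)) $$ (j, l)
      = (\<Sum>c<Suc n. cnj (vv (Suc n) (Suc j) $ c) * vv (Suc n) (Suc l) $ c)"
    by (simp add: vv_mat_def cadj_def scalar_prod_def lessThan_atLeast0
        del: sum.atLeast0_lessThan_Suc)
  also have "\<dots> = 1\<^sub>m (Suc n) $$ (j, l)"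
    using assms \<open>j < _\<close> \<open>l < _\<close> by (subst vv_orthonormal) auto
  finally show "(cadj (vv_mat (Suc n)) * vv_mat (Suc n)) $$ (j, l) = 1\<^sub>m (Suc n) $$ (j, l)" .
qed (simp_all add: vv_mat_def cadj_def)

lemma vv_complete:
  assumes "2 \<le> n" "a < Suc n" "b < Suc n"
  shows "(\<Sum>j=1..Suc n. vv (Suc n) j $ a * cnj (vv (Suc n) j $ b)) = (if a = b then 1 else 0)"
proof -
  have "vv_mat (Suc n) * cadj (vv_mat (Suc n)) = 1\<^sub>m (Suc n)"
    using assms(1) by (intro mat_mult_left_right_inverse[OF _ _ cadj_vv_mat_mult])
      (simp_all add: vv_mat_def cadj_def)
  have "(\<Sum>j=1..Suc n. vv (Suc n) j $ a * cnj (vv (Suc n) j $ b))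
      = (\<Sum>j<Suc n. vv (Suc n) (Suc j) $ a * cnj (vv (Suc n) (Suc j) $ b))"
    by (simp only: One_nat_def sum.shift_bounds_cl_Suc_ivl atLeast0AtMost lessThan_Suc_atMost)
  also have "\<dots> = (vv_mat (Suc n) * cadj (vv_mat (Suc n))) $$ (a, b)"
    using assms by (simp add: vv_mat_def cadj_def scalar_prod_def lessThan_atLeast0
        del: sum.atLeast0_lessThan_Suc sum.lessThan_Suc)
  also have "\<dots> = (if a = b then 1 else 0)"
    using assms \<open>vv_mat (Suc n) * cadj (vv_mat (Suc n)) = 1\<^sub>m (Suc n)\<close> by simp
  finally show ?thesis .
qed

lemma UU_entry:
  assumes "a < d" "b < d"
  shows "UU d $$ (a, b) = (\<Sum>j=1..d. lam d j * vv d j $ a * cnj (vv d j $ b))"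
  using assms by (simp add: UU_def)

lemma UU_carrier: "UU d \<in> carrier_mat d d"
  by (simp add: UU_def)

lemma lam_mult_cnj: "lam d j * cnj (lam d j) = 1"
  using cnj_omega_power_mult[of "d - 2" "j - 2"] by (simp add: lam_def mult.commute)

lemma UU_mult_cadj:
  assumes "2 \<le> n"
  shows "UU (Suc n) * cadj (UU (Suc n)) = 1\<^sub>m (Suc n)"
proof (rule eq_matI)
  fix a b
  assume "a < dim_row (1\<^sub>m (Suc n))" "b < dim_col (1\<^sub>m (Suc n))"
  then have ab: "a < Suc n" "b < Suc n"
    by simp_all
  let ?v = "\<lambda>j c. vv (Suc n) j $ c"
  have "(UU (Suc n) * cadj (UU (Suc n))) $$ (a, b)
      = (\<Sum>c<Suc n. (\<Sum>j=1..Suc n. lam (Suc n) j * ?v j a * cnj (?v j c))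
          * cnj (\<Sum>l=1..Suc n. lam (Suc n) l * ?v l b * cnj (?v l c)))"
    using ab by (simp add: UU_def cadj_def scalar_prod_def lessThan_atLeast0
        del: sum.atLeast0_lessThan_Suc)
  also have "\<dots> = (\<Sum>j=1..Suc n. lam (Suc n) j * cnj (lam (Suc n) j) * ?v j a * cnj (?v j b))"
    using assms by (intro sum_outer_products_mult vv_orthonormal) auto
  also have "\<dots> = (\<Sum>j=1..Suc n. ?v j a * cnj (?v j b))"
    by (simp add: lam_mult_cnj)
  also have "\<dots> = 1\<^sub>m (Suc n) $$ (a, b)"
    unfolding vv_complete[OF assms ab] using ab by simp
  finally show "(UU (Suc n) * cadj (UU (Suc n))) $$ (a, b) = 1\<^sub>m (Suc n) $$ (a, b)" .
qed (simp_all add: UU_def cadj_def)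

lemma UU_entry_split:
  assumes "2 \<le> n" "a < Suc n" "b < Suc n"
  shows "UU (Suc n) $$ (a, b) = vv (Suc n) 1 $ a * cnj (vv (Suc n) 1 $ b)
      - vv (Suc n) 2 $ a * cnj (vv (Suc n) 2 $ b)
      + (\<Sum>p=1..n-1. omega (n - 1) ^ p * vv (Suc n) (p + 2) $ a * cnj (vv (Suc n) (p + 2) $ b))"
    (is "_ = ?rhs")
proof -
  have "UU (Suc n) $$ (a, b) = (\<Sum>j=1..Suc n. lam (Suc n) j * vv (Suc n) j $ a * cnj (vv (Suc n) j $ b))"
    using assms(2,3) by (rule UU_entry)
  also have "\<dots> = lam (Suc n) 1 * vv (Suc n) 1 $ a * cnj (vv (Suc n) 1 $ b)
      + lam (Suc n) 2 * vv (Suc n) 2 $ a * cnj (vv (Suc n) 2 $ b)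
      + (\<Sum>p=1..n-1. lam (Suc n) (p + 2) * vv (Suc n) (p + 2) $ a * cnj (vv (Suc n) (p + 2) $ b))"
    using assms by (subst sum_split_first_two) auto
  also have "\<dots> = ?rhs"
    by (simp add: lam_def)
  finally show ?thesis .
qed

lemma of_real_sqrt_2_mult_self: "complex_of_real (sqrt 2) * complex_of_real (sqrt 2) = 2"
  by (simp flip: of_real_mult)

lemma UU_0_0:
  assumes "2 \<le> n"
  shows "UU (Suc n) $$ (0, 0) = 0"
  using assms by (simp add: UU_entry_split vv_coord_0 vv_coord0_def)

lemma UU_0_Suc:
  assumes "2 \<le> n" "m < n"
  shows "UU (Suc n) $$ (0, Suc m) = 1 / sqrt n"
  using assms of_real_sqrt_2_mult_self
  by (simp add: UU_entry_split vv_coord_0 vv_coord_Suc vv_coord0_def vv_amplitude_def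
      real_sqrt_mult field_simps)

lemma UU_Suc_0:
  assumes "2 \<le> n" "k < n"
  shows "UU (Suc n) $$ (Suc k, 0) = 1 / sqrt n"
  using assms of_real_sqrt_2_mult_self
  by (simp add: UU_entry_split vv_coord_0 vv_coord_Suc vv_coord0_def vv_amplitude_def
      real_sqrt_mult field_simps)

lemma UU_Suc_Suc:
  assumes "2 \<le> n" "k < n" "m < n"
  shows "UU (Suc n) $$ (Suc k, Suc m)
    = (\<Sum>p=1..n-1. (omega (n - 1) * (cnj (omega n ^ m) * omega n ^ k)) ^ p) / n"
proof -
  have sq: "complex_of_real (sqrt n) * complex_of_real (sqrt n) = n"
    by (simp flip: of_real_mult)
  have summand: "omega (n - 1) ^ p * vv (Suc n) (p + 2) $ Suc k * cnj (vv (Suc n) (p + 2) $ Suc m)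
      = (omega (n - 1) * (cnj (omega n ^ m) * omega n ^ k)) ^ p / n" if "1 \<le> p" for p
    using assms that by (simp add: vv_coord_Suc vv_amplitude_def sq power_mult_distrib
        flip: power_mult) (simp add: mult.commute)
  have "vv (Suc n) 1 $ Suc k * cnj (vv (Suc n) 1 $ Suc m)
      = vv (Suc n) 2 $ Suc k * cnj (vv (Suc n) 2 $ Suc m)"
    using assms by (simp add: vv_coord_Suc vv_amplitude_def)
  then have "UU (Suc n) $$ (Suc k, Suc m)
      = (\<Sum>p=1..n-1. omega (n - 1) ^ p * vv (Suc n) (p + 2) $ Suc k * cnj (vv (Suc n) (p + 2) $ Suc m))"
    using assms by (simp add: UU_entry_split)
  also have "\<dots> = (\<Sum>p=1..n-1. (omega (n - 1) * (cnj (omega n ^ m) * omega n ^ k)) ^ p / n)"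
    by (intro sum.cong refl summand) simp
  finally show ?thesis
    by (simp add: sum_divide_distrib)
qed

lemma UU_Suc_Suc_eq_0_iff:
  assumes "3 \<le> n" "k < n" "m < n"
  shows "UU (Suc n) $$ (Suc k, Suc m) = 0 \<longleftrightarrow> k = m"
proof -
  define w where "w = cnj (omega n ^ m) * omega n ^ k"
  define z where "z = omega (n - 1) * w"
  have "w ^ n = 1"
    unfolding w_def using assms by (intro omega_ratio_power_n) simp
  moreover have "w ^ n = w * w ^ (n - 1)"
    using assms by (cases n) simp_all
  ultimately have "w \<noteq> 0" and w_root_iff: "w ^ (n - 1) = 1 \<longleftrightarrow> w = 1"
    by auto
  have w_eq_1_iff: "w = 1 \<longleftrightarrow> k = m"
    unfolding w_def using omega_ratio_eq_1_iff[of m n k] assms by auto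
  have omega_root: "omega (n - 1) ^ (n - 1) = 1" and "omega (n - 1) \<noteq> 1"
    using assms omega_power_eq_1_iff[of "n - 1" "n - 1"] omega_power_eq_1_iff[of "n - 1" 1] by simp_all
  have z_root_iff: "z \<noteq> 1 \<and> z ^ (n - 1) = 1 \<longleftrightarrow> k = m"
  proof (cases "k = m")
    case True
    then show ?thesis
      using w_eq_1_iff omega_root \<open>omega (n - 1) \<noteq> 1\<close> by (simp add: z_def)
  next
    case False
    then have "z ^ (n - 1) \<noteq> 1"
      using omega_root w_root_iff w_eq_1_iff by (simp add: z_def power_mult_distrib)
    then show ?thesis
      using False by simp
  qed
  have "z \<noteq> 0"
    using \<open>w \<noteq> 0\<close> by (simp add: z_def omega_nonzero)
  moreover have "UU (Suc n) $$ (Suc k, Suc m) = (\<Sum>p=1..n-1. z ^ p) / n"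
    using assms by (simp add: UU_Suc_Suc w_def z_def)
  ultimately show ?thesis
    using assms z_root_iff sum_powers_from_1_eq_0_iff[of z "n - 1"] by simp
qed

lemma UU_eq_0_iff:
  assumes "3 \<le> n" "a < Suc n" "b < Suc n"
  shows "UU (Suc n) $$ (a, b) = 0 \<longleftrightarrow> a = b"
  using assms by (cases a; cases b) (simp_all add: UU_0_0 UU_0_Suc UU_Suc_0 UU_Suc_Suc_eq_0_iff)

theorem mainTheorem7:
  fixes d :: nat
  assumes "d \<ge> 4"
  shows "unitary_mat d (UU d)
    \<and> (\<forall>a<d. UU d $$ (a,a) = 0)
    \<and> (\<forall>a<d. \<forall>b<d. a \<noteq> b \<longrightarrow> UU d $$ (a,b) \<noteq> 0)"
proof -
  obtain n where d: "d = Suc n" and n: "3 \<le> n"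
    using assms by (cases d) auto
  have "unitary_mat d (UU d)"
    unfolding d using n by (intro unitary_matI UU_carrier UU_mult_cadj) simp
  moreover have "\<forall>a<d. \<forall>b<d. UU d $$ (a, b) = 0 \<longleftrightarrow> a = b"
    unfolding d using n by (simp add: UU_eq_0_iff)
  ultimately show ?thesis
    by blast
qed

end
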